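(* Let $(L,\le,\bot,\top)$ be a complete lattice and $(\&_i,\swarrow^i,\nwarrow_i)$, $i=1,\dots,n$, adjoint triples on $L$ with $x\,\&_i\,\top=\top\,\&_i\,x=x$ for all $x\in L$ and all $i$. Let $(A,B,R,\sigma)$ be a normalized context with concept lattice $\mathcal{M}$. If $\mathcal{M}$ has a decomposition into independent blocks $\{K_\mu\}_{\mu\in\Lambda}$, then the sets $\{A_\mu\mid\mu\in\Lambda\}$ form a partition of $A$ and the sets $\{B_\mu\mid\mu\in\Lambda\}$ form a partition of $B$, where, with $K_\mu^*=K_\mu\setminus\{\langle g_\top,f_\bot\rangle,\langle g_\bot,f_\top\rangle\}$, $$A_\mu=\{a\in A\mid\langle\phi_{a,x}^\downarrow,\phi_{a,x}^{\downarrow\uparrow}\rangle\in K_\mu^*\text{ for some }x\in L\},\quad B_\mu=\{b\in B\mid\langle\phi_{b,y}^{\uparrow\downarrow},\phi_{b,y}^{\uparrow}\rangle\in K_\mu^*\text{ for some }y\in L\}.$$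
   Context: An adjoint triple on $L$ is a triple of maps $\&,\swarrow,\nwarrow\colon L\times L\to L$ with $x\le z\swarrow y\iff x\& y\le z\iff y\le z\nwarrow x$. A context is $(A,B,R,\sigma)$ with $A,B$ non-empty, $R\colon A\times B\to L$, $\sigma\colon A\times B\to\{1,\dots,n\}$; normalized means every $a\in A$ has $b_1,b_2$ with $R(a,b_1)\ne\bot$, $R(a,b_2)=\bot$, and every $b\in B$ has $a_1,a_2$ with $R(a_1,b)\ne\bot$, $R(a_2,b)=\bot$. For $g\colon B\to L$, $f\colon A\to L$: $g^\uparrow(a)=\inf_{b}R(a,b)\swarrow^{\sigma(a,b)}g(b)$, $f^\downarrow(b)=\inf_{a}R(a,b)\nwarrow_{\sigma(a,b)}f(a)$. $\mathcal{M}$ is the complete lattice of pairs $\langle g,f\rangle$ with $g^\uparrow=f$, $f^\downarrow=g$, ordered by $g_1\le g_2$ pointwise; top $\langle g_\top,f_\bot\rangle$, bottom $\langle g_\bot,f_\top\rangle$ ($g_\top,g_\bot,f_\top,f_\bot$ constant maps). $\phi_{a,x}\colon A\to L$ takes value $x$ at $a$ and $\bot$ elsewhere; $\phi_{b,y}\colon B\to L$ takes value $y$ at $b$ and $\bot$ elsewhere. For a bounded lattice $(M,\preceq,\bot,\top)$, a block is a sublattice $K\subsetneq M$ with $K\setminus\{\bot,\top\}\ne\varnothing$ and $(\{x\mid k\preceq x\}\cup\{x\mid x\preceq k\})\setminus\{\bot,\top\}\subseteq K$ for all $k\in K\setminus\{\bot,\top\}$. Blocks $K_1,K_2$ are independent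 if $K_1\cap K_2\subseteq\{\bot,\top\}$. A decomposition into independent blocks is a family of pairwise independent blocks whose union is $M$. *)

theory Defs
  imports Main "HOL-Library.Disjoint_Sets"
begin

definition adjoint_triple :: "('l::order \<Rightarrow> 'l \<Rightarrow> 'l) \<Rightarrow> ('l \<Rightarrow> 'l \<Rightarrow> 'l) \<Rightarrow> ('l \<Rightarrow> 'l \<Rightarrow> 'l) \<Rightarrow> bool" where
  "adjoint_triple tn sw nw \<longleftrightarrow>
     (\<forall>x y z. (x \<le> sw z y \<longleftrightarrow> tn x y \<le> z) \<and> (tn x y \<le> z \<longleftrightarrow> y \<le> nw z x))"

text \<open>The object set A is the type 'a, the attribute set B is the type 'b (types are nonempty).\<close>
definition normalized_context :: "('a \<Rightarrow> 'b \<Rightarrow> 'l::complete_lattice) \<Rightarrow> bool" where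
  "normalized_context R \<longleftrightarrow>
     (\<forall>a. (\<exists>b1. R a b1 \<noteq> bot) \<and> (\<exists>b2. R a b2 = bot)) \<and>
     (\<forall>b. (\<exists>a1. R a1 b \<noteq> bot) \<and> (\<exists>a2. R a2 b = bot))"

definition up_op :: "(nat \<Rightarrow> 'l::complete_lattice \<Rightarrow> 'l \<Rightarrow> 'l) \<Rightarrow> ('a \<Rightarrow> 'b \<Rightarrow> 'l) \<Rightarrow> ('a \<Rightarrow> 'b \<Rightarrow> nat)
     \<Rightarrow> ('b \<Rightarrow> 'l) \<Rightarrow> ('a \<Rightarrow> 'l)" where
  "up_op sw R \<sigma> g = (\<lambda>a. INF b. sw (\<sigma> a b) (R a b) (g b))"

definition down_op :: "(nat \<Rightarrow> 'l::complete_lattice \<Rightarrow> 'l \<Rightarrow> 'l) \<Rightarrow> ('a \<Rightarrow> 'b \<Rightarrow> 'l) \<Rightarrow> ('a \<Rightarrow> 'b \<Rightarrow> nat)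
     \<Rightarrow> ('a \<Rightarrow> 'l) \<Rightarrow> ('b \<Rightarrow> 'l)" where
  "down_op nw R \<sigma> f = (\<lambda>b. INF a. nw (\<sigma> a b) (R a b) (f a))"

definition concepts where
  "concepts sw nw R \<sigma> = {(g, f). up_op sw R \<sigma> g = f \<and> down_op nw R \<sigma> f = g}"

definition concept_le :: "('b \<Rightarrow> 'l::order) \<times> ('a \<Rightarrow> 'l) \<Rightarrow> ('b \<Rightarrow> 'l) \<times> ('a \<Rightarrow> 'l) \<Rightarrow> bool" where
  "concept_le c d \<longleftrightarrow> fst c \<le> fst d"

definition concept_top :: "('b \<Rightarrow> 'l::complete_lattice) \<times> ('a \<Rightarrow> 'l)" where
  "concept_top = ((\<lambda>_. top), (\<lambda>_. bot))"

definition concept_bot :: "('b \<Rightarrow> 'l::complete_lattice) \<times> ('a \<Rightarrow> 'l)" where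
  "concept_bot = ((\<lambda>_. bot), (\<lambda>_. top))"

definition is_join_in :: "'c set \<Rightarrow> ('c \<Rightarrow> 'c \<Rightarrow> bool) \<Rightarrow> 'c \<Rightarrow> 'c \<Rightarrow> 'c \<Rightarrow> bool" where
  "is_join_in M le x y z \<longleftrightarrow> z \<in> M \<and> le x z \<and> le y z \<and> (\<forall>w\<in>M. le x w \<and> le y w \<longrightarrow> le z w)"

definition is_meet_in :: "'c set \<Rightarrow> ('c \<Rightarrow> 'c \<Rightarrow> bool) \<Rightarrow> 'c \<Rightarrow> 'c \<Rightarrow> 'c \<Rightarrow> bool" where
  "is_meet_in M le x y z \<longleftrightarrow> z \<in> M \<and> le z x \<and> le z y \<and> (\<forall>w\<in>M. le w x \<and> le w y \<longrightarrow> le w z)"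

definition sublattice_of :: "'c set \<Rightarrow> 'c set \<Rightarrow> ('c \<Rightarrow> 'c \<Rightarrow> bool) \<Rightarrow> bool" where
  "sublattice_of K M le \<longleftrightarrow> K \<subseteq> M \<and>
     (\<forall>x\<in>K. \<forall>y\<in>K. \<exists>z\<in>K. is_join_in M le x y z) \<and>
     (\<forall>x\<in>K. \<forall>y\<in>K. \<exists>z\<in>K. is_meet_in M le x y z)"

definition is_block :: "'c set \<Rightarrow> ('c \<Rightarrow> 'c \<Rightarrow> bool) \<Rightarrow> 'c \<Rightarrow> 'c \<Rightarrow> 'c set \<Rightarrow> bool" where
  "is_block M le bt tp K \<longleftrightarrow>
     sublattice_of K M le \<and> K \<noteq> M \<and> K - {bt, tp} \<noteq> {} \<and>
     (\<forall>k\<in>K - {bt, tp}. ({x\<in>M. le k x} \<union> {x\<in>M. le x k}) - {bt, tp} \<subseteq> K)"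

definition independent_blocks :: "'c \<Rightarrow> 'c \<Rightarrow> 'c set \<Rightarrow> 'c set \<Rightarrow> bool" where
  "independent_blocks bt tp K1 K2 \<longleftrightarrow> K1 \<inter> K2 \<subseteq> {bt, tp}"

definition decomposition_independent_blocks ::
    "'c set \<Rightarrow> ('c \<Rightarrow> 'c \<Rightarrow> bool) \<Rightarrow> 'c \<Rightarrow> 'c \<Rightarrow> 'i set \<Rightarrow> ('i \<Rightarrow> 'c set) \<Rightarrow> bool" where
  "decomposition_independent_blocks M le bt tp \<Lambda> K \<longleftrightarrow>
     (\<forall>\<mu>\<in>\<Lambda>. is_block M le bt tp (K \<mu>)) \<and>
     (\<forall>\<mu>\<in>\<Lambda>. \<forall>\<nu>\<in>\<Lambda>. \<mu> \<noteq> \<nu> \<longrightarrow> independent_blocks bt tp (K \<mu>) (K \<nu>)) \<and>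
     (\<Union>\<mu>\<in>\<Lambda>. K \<mu>) = M"

definition phi :: "'x \<Rightarrow> 'l::complete_lattice \<Rightarrow> 'x \<Rightarrow> 'l" where
  "phi a x = (\<lambda>a'. if a' = a then x else bot)"

definition obj_block where
  "obj_block sw nw R \<sigma> Kmu =
     {a. \<exists>x. (down_op nw R \<sigma> (phi a x), up_op sw R \<sigma> (down_op nw R \<sigma> (phi a x)))
              \<in> Kmu - {concept_top, concept_bot}}"

definition attr_block where
  "attr_block sw nw R \<sigma> Kmu =
     {b. \<exists>y. (down_op nw R \<sigma> (up_op sw R \<sigma> (phi b y)), up_op sw R \<sigma> (phi b y))
              \<in> Kmu - {concept_top, concept_bot}}"

end

theory Submission
  imports Defs
begin

(* For an object a whose row of R is not identically bot, the concept generated by phi a top lies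
   below the concept generated by phi a x, and both are proper whenever x is not bot. A block contains
   every proper element comparable with one of its proper elements, so a lies in A_mu exactly when
   the concept generated by phi a top lies in K_mu; since the blocks cover M and meet only in bot and
   top, every object lies in exactly one A_mu. Each block contains a proper concept (g, f), and for
   any a with f a not bot, (g, f) lies below the concept generated by phi a (f a); hence no A_mu is
   empty. The attribute side is dual. *)

lemma block_comparable_mem:
  assumes "is_block M le bt tp K" "k \<in> K" "k \<notin> {bt, tp}" "c \<in> M" "c \<notin> {bt, tp}"
    and "le k c \<or> le c k"
  shows "c \<in> K"
  using assms unfolding is_block_def by blast

lemma block_has_proper_element:
  assumes "is_block M le bt tp K"
  obtains k where "k \<in> K" "k \<in> M" "k \<notin> {bt, tp}"
  using assms unfolding is_block_def sublattice_of_def by blast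

lemma partition_on_block_preimages:
  assumes dec: "decomposition_independent_blocks M le bt tp \<Lambda> K"
    and proper: "\<And>x. Q x \<in> M" "\<And>x. Q x \<notin> {bt, tp}"
    and hit: "\<And>\<mu>. \<mu> \<in> \<Lambda> \<Longrightarrow> \<exists>x. Q x \<in> K \<mu>"
  shows "partition_on UNIV ((\<lambda>\<mu>. {x. Q x \<in> K \<mu>}) ` \<Lambda>)"
proof (rule partition_onI)
  have cover: "(\<Union>\<mu>\<in>\<Lambda>. K \<mu>) = M"
    using dec unfolding decomposition_independent_blocks_def by blast
  show "\<Union> ((\<lambda>\<mu>. {x. Q x \<in> K \<mu>}) ` \<Lambda>) = UNIV"
    using proper(1) cover by blast
next
  fix p q
  assume "p \<in> (\<lambda>\<mu>. {x. Q x \<in> K \<mu>}) ` \<Lambda>" "q \<in> (\<lambda>\<mu>. {x. Q x \<in> K \<mu>}) ` \<Lambda>" "p \<noteq> q"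
  then obtain \<mu> \<nu> where "\<mu> \<in> \<Lambda>" "\<nu> \<in> \<Lambda>" "\<mu> \<noteq> \<nu>"
    and "p = {x. Q x \<in> K \<mu>}" "q = {x. Q x \<in> K \<nu>}"
    by blast
  moreover have "K \<mu> \<inter> K \<nu> \<subseteq> {bt, tp}"
    using dec \<open>\<mu> \<in> \<Lambda>\<close> \<open>\<nu> \<in> \<Lambda>\<close> \<open>\<mu> \<noteq> \<nu>\<close>
    unfolding decomposition_independent_blocks_def independent_blocks_def by blast
  ultimately show "disjnt p q"
    using proper(2) unfolding disjnt_def by blast
next
  show "{} \<notin> (\<lambda>\<mu>. {x. Q x \<in> K \<mu>}) ` \<Lambda>"
    using hit by blast
qed

locale multi_adjoint_context =
  fixes n :: nat
    and tn sw nw :: "nat \<Rightarrow> 'l::complete_lattice \<Rightarrow> 'l \<Rightarrow> 'l"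
    and R :: "'a \<Rightarrow> 'b \<Rightarrow> 'l"
    and \<sigma> :: "'a \<Rightarrow> 'b \<Rightarrow> nat"
  assumes adj: "\<forall>i\<in>{1..n}. adjoint_triple (tn i) (sw i) (nw i)"
    and bnd: "\<forall>i\<in>{1..n}. \<forall>x. tn i x top = x \<and> tn i top x = x"
    and sig: "\<forall>a b. \<sigma> a b \<in> {1..n}"
begin

abbreviation up where "up \<equiv> up_op sw R \<sigma>"
abbreviation dn where "dn \<equiv> down_op nw R \<sigma>"
abbreviation \<M> where "\<M> \<equiv> concepts sw nw R \<sigma>"

lemma le_sw_iff: "x \<le> sw (\<sigma> a b) z y \<longleftrightarrow> tn (\<sigma> a b) x y \<le> z"
  and le_nw_iff: "y \<le> nw (\<sigma> a b) z x \<longleftrightarrow> tn (\<sigma> a b) x y \<le> z"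
  using adj sig unfolding adjoint_triple_def by blast+

lemma tn_top_right: "tn (\<sigma> a b) x top = x"
  and tn_top_left: "tn (\<sigma> a b) top x = x"
  using bnd sig by blast+

lemma sw_bot: "sw (\<sigma> a b) z bot = top"
  using le_sw_iff[of top a b z bot] le_nw_iff[of bot a b z top] by (simp add: top_le)

lemma nw_bot: "nw (\<sigma> a b) z bot = top"
  using le_nw_iff[of top a b z bot] le_sw_iff[of bot a b z top] by (simp add: top_le)

lemma le_down_iff_le_up: "g \<le> dn f \<longleftrightarrow> f \<le> up g"
proof -
  have "g \<le> dn f \<longleftrightarrow> (\<forall>a b. g b \<le> nw (\<sigma> a b) (R a b) (f a))"
    by (auto simp: down_op_def le_fun_def le_INF_iff)
  also have "\<dots> \<longleftrightarrow> (\<forall>a b. f a \<le> sw (\<sigma> a b) (R a b) (g b))"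
    using le_sw_iff le_nw_iff by blast
  also have "\<dots> \<longleftrightarrow> f \<le> up g"
    by (auto simp: up_op_def le_fun_def le_INF_iff)
  finally show ?thesis .
qed

lemma le_down_up: "g \<le> dn (up g)"
  and le_up_down: "f \<le> up (dn f)"
  using le_down_iff_le_up by blast+

lemma up_antimono: "g1 \<le> g2 \<Longrightarrow> up g2 \<le> up g1"
  by (meson le_down_iff_le_up le_down_up order_trans)

lemma down_antimono: "f1 \<le> f2 \<Longrightarrow> dn f2 \<le> dn f1"
  by (meson le_down_iff_le_up le_up_down order_trans)

lemma down_in_concepts: "(dn f, up (dn f)) \<in> \<M>"
  by (simp add: concepts_def antisym down_antimono le_down_up le_up_down)

lemma up_in_concepts: "(dn (up g), up g) \<in> \<M>"
  by (simp add: concepts_def antisym up_antimono le_down_up le_up_down)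

lemma down_bot: "dn (\<lambda>_. bot) = (\<lambda>_. top)"
  using le_down_iff_le_up[of "\<lambda>_. top" "\<lambda>_. bot"] by (simp add: le_fun_def top_le fun_eq_iff)

lemma up_bot: "up (\<lambda>_. bot) = (\<lambda>_. top)"
  using le_down_iff_le_up[of "\<lambda>_. bot" "\<lambda>_. top"] by (simp add: le_fun_def top_le fun_eq_iff)

lemma concept_eq_top_iff: "c \<in> \<M> \<Longrightarrow> c = concept_top \<longleftrightarrow> snd c = (\<lambda>_. bot)"
  by (cases c) (auto simp: concepts_def concept_top_def down_bot)

lemma concept_eq_bot_iff: "c \<in> \<M> \<Longrightarrow> c = concept_bot \<longleftrightarrow> fst c = (\<lambda>_. bot)"
  by (cases c) (auto simp: concepts_def concept_bot_def up_bot)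

lemma R_le_down_phi_top: "R a b \<le> dn (phi a top) b"
  unfolding down_op_def
proof (rule INF_greatest)
  fix a'
  show "R a b \<le> nw (\<sigma> a' b) (R a' b) (phi a top a')"
    using le_nw_iff[of "R a b" a b "R a b" top] by (cases "a' = a") (simp_all add: phi_def tn_top_left nw_bot)
qed

lemma R_le_up_phi_top: "R a b \<le> up (phi b top) a"
  unfolding up_op_def
proof (rule INF_greatest)
  fix b'
  show "R a b \<le> sw (\<sigma> a b') (R a b') (phi b top b')"
    using le_sw_iff[of "R a b" a b "R a b" top] by (cases "b' = b") (simp_all add: phi_def tn_top_right sw_bot)
qed

lemma phi_le_phi_top: "phi a x \<le> phi a top"
  by (simp add: phi_def le_fun_def)

lemma phi_le: "phi a (f a) \<le> f"
  by (simp add: phi_def le_fun_def)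

definition object_concept :: "'a \<Rightarrow> 'l \<Rightarrow> ('b \<Rightarrow> 'l) \<times> ('a \<Rightarrow> 'l)" where
  "object_concept a x = (dn (phi a x), up (dn (phi a x)))"

lemma top_ne_bot_if_R_ne_bot: "R a b \<noteq> bot \<Longrightarrow> (top :: 'l) \<noteq> bot"
  by (metis bot_unique top_greatest)

lemma object_concept_in_concepts: "object_concept a x \<in> \<M>"
  by (simp add: object_concept_def down_in_concepts)

lemma concept_le_object_concept_top: "concept_le (object_concept a top) (object_concept a x)"
  by (simp add: object_concept_def concept_le_def down_antimono phi_le_phi_top)

lemma object_concept_proper:
  assumes "x \<noteq> bot" "R a b \<noteq> bot"
  shows "object_concept a x \<notin> {concept_bot, concept_top}"
proof -
  have "R a b \<le> fst (object_concept a x) b"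
    using R_le_down_phi_top[of a b] concept_le_object_concept_top[of a x]
    by (auto simp: concept_le_def object_concept_def le_fun_def intro: order_trans)
  moreover have "x \<le> snd (object_concept a x) a"
    using le_up_down[of "phi a x"] by (auto simp: object_concept_def le_fun_def phi_def dest: spec[of _ a])
  ultimately have "fst (object_concept a x) \<noteq> (\<lambda>_. bot)" "snd (object_concept a x) \<noteq> (\<lambda>_. bot)"
    using assms by (auto simp: bot_unique)
  then show ?thesis
    using concept_eq_top_iff concept_eq_bot_iff object_concept_in_concepts by blast
qed

lemma object_concept_top_proper: "R a b \<noteq> bot \<Longrightarrow> object_concept a top \<notin> {concept_bot, concept_top}"
  using object_concept_proper top_ne_bot_if_R_ne_bot by blast

lemma concept_le_object_concept: "(g, f) \<in> \<M> \<Longrightarrow> concept_le (g, f) (object_concept a (f a))"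
  using le_down_iff_le_up phi_le by (auto simp: concepts_def concept_le_def object_concept_def)

lemma object_concept_top_in_block:
  assumes blk: "is_block \<M> concept_le concept_bot concept_top K"
    and "object_concept a x \<in> K" "object_concept a x \<notin> {concept_bot, concept_top}" "R a b \<noteq> bot"
  shows "object_concept a top \<in> K"
  using block_comparable_mem[OF blk assms(2,3) object_concept_in_concepts object_concept_top_proper]
    concept_le_object_concept_top assms(4) by blast

lemma obj_block_eq:
  assumes rows: "\<forall>a. \<exists>b. R a b \<noteq> bot"
    and blk: "is_block \<M> concept_le concept_bot concept_top K"
  shows "obj_block sw nw R \<sigma> K = {a. object_concept a top \<in> K}"
proof (intro set_eqI iffI)
  fix a
  assume "a \<in> obj_block sw nw R \<sigma> K"
  then obtain x where "object_concept a x \<in> K" "object_concept a x \<notin> {concept_bot, concept_top}"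
    unfolding obj_block_def object_concept_def[symmetric] by blast
  then show "a \<in> {a. object_concept a top \<in> K}"
    using object_concept_top_in_block[OF blk] rows by blast
next
  fix a
  assume "a \<in> {a. object_concept a top \<in> K}"
  then show "a \<in> obj_block sw nw R \<sigma> K"
    using object_concept_top_proper rows unfolding obj_block_def object_concept_def[symmetric] by blast
qed

lemma block_contains_object_concept_top:
  assumes rows: "\<forall>a. \<exists>b. R a b \<noteq> bot"
    and blk: "is_block \<M> concept_le concept_bot concept_top K"
  shows "\<exists>a. object_concept a top \<in> K"
proof -
  obtain g f where k: "(g, f) \<in> K" "(g, f) \<in> \<M>" "(g, f) \<notin> {concept_bot, concept_top}"
    using block_has_proper_element[OF blk] by (metis surj_pair)
  then obtain a where fa: "f a \<noteq> bot"
    using concept_eq_top_iff by fastforce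
  obtain b where Rab: "R a b \<noteq> bot"
    using rows by blast
  have "object_concept a (f a) \<in> K"
    using block_comparable_mem[OF blk k(1,3) object_concept_in_concepts object_concept_proper[OF fa Rab]]
      concept_le_object_concept[OF k(2)] by blast
  then show ?thesis
    using object_concept_top_in_block[OF blk _ object_concept_proper[OF fa Rab] Rab] by blast
qed

definition attribute_concept :: "'b \<Rightarrow> 'l \<Rightarrow> ('b \<Rightarrow> 'l) \<times> ('a \<Rightarrow> 'l)" where
  "attribute_concept b y = (dn (up (phi b y)), up (phi b y))"

lemma attribute_concept_in_concepts: "attribute_concept b y \<in> \<M>"
  by (simp add: attribute_concept_def up_in_concepts)

lemma concept_le_attribute_concept_top: "concept_le (attribute_concept b y) (attribute_concept b top)"
  by (simp add: attribute_concept_def concept_le_def down_antimono up_antimono phi_le_phi_top)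

lemma attribute_concept_proper:
  assumes "y \<noteq> bot" "R a b \<noteq> bot"
  shows "attribute_concept b y \<notin> {concept_bot, concept_top}"
proof -
  have "y \<le> fst (attribute_concept b y) b"
    using le_down_up[of "phi b y"] by (auto simp: attribute_concept_def le_fun_def phi_def dest: spec[of _ b])
  moreover have "R a b \<le> snd (attribute_concept b y) a"
    using R_le_up_phi_top[of a b] up_antimono[OF phi_le_phi_top[of b y]]
    by (auto simp: attribute_concept_def le_fun_def intro: order_trans)
  ultimately have "fst (attribute_concept b y) \<noteq> (\<lambda>_. bot)" "snd (attribute_concept b y) \<noteq> (\<lambda>_. bot)"
    using assms by (auto simp: bot_unique)
  then show ?thesis
    using concept_eq_top_iff concept_eq_bot_iff attribute_concept_in_concepts by blast
qed

lemma attribute_concept_top_proper: "R a b \<noteq> bot \<Longrightarrow> attribute_concept b top \<notin> {concept_bot, concept_top}"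
  using attribute_concept_proper top_ne_bot_if_R_ne_bot by blast

lemma attribute_concept_le_concept:
  assumes "(g, f) \<in> \<M>"
  shows "concept_le (attribute_concept b (g b)) (g, f)"
proof -
  have "f \<le> up (phi b (g b))"
    using assms up_antimono[OF phi_le[of b g]] by (simp add: concepts_def)
  then have "dn (up (phi b (g b))) \<le> dn f"
    by (rule down_antimono)
  then show ?thesis
    using assms by (simp add: concepts_def concept_le_def attribute_concept_def)
qed

lemma attribute_concept_top_in_block:
  assumes blk: "is_block \<M> concept_le concept_bot concept_top K"
    and "attribute_concept b y \<in> K" "attribute_concept b y \<notin> {concept_bot, concept_top}" "R a b \<noteq> bot"
  shows "attribute_concept b top \<in> K"
  using block_comparable_mem[OF blk assms(2,3) attribute_concept_in_concepts attribute_concept_top_proper]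
    concept_le_attribute_concept_top assms(4) by blast

lemma attr_block_eq:
  assumes cols: "\<forall>b. \<exists>a. R a b \<noteq> bot"
    and blk: "is_block \<M> concept_le concept_bot concept_top K"
  shows "attr_block sw nw R \<sigma> K = {b. attribute_concept b top \<in> K}"
proof (intro set_eqI iffI)
  fix b
  assume "b \<in> attr_block sw nw R \<sigma> K"
  then obtain y where "attribute_concept b y \<in> K" "attribute_concept b y \<notin> {concept_bot, concept_top}"
    unfolding attr_block_def attribute_concept_def[symmetric] by blast
  then show "b \<in> {b. attribute_concept b top \<in> K}"
    using attribute_concept_top_in_block[OF blk] cols by blast
next
  fix b
  assume "b \<in> {b. attribute_concept b top \<in> K}"
  then show "b \<in> attr_block sw nw R \<sigma> K"
    using attribute_concept_top_proper cols unfolding attr_block_def attribute_concept_def[symmetric] by blast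
qed

lemma block_contains_attribute_concept_top:
  assumes cols: "\<forall>b. \<exists>a. R a b \<noteq> bot"
    and blk: "is_block \<M> concept_le concept_bot concept_top K"
  shows "\<exists>b. attribute_concept b top \<in> K"
proof -
  obtain g f where k: "(g, f) \<in> K" "(g, f) \<in> \<M>" "(g, f) \<notin> {concept_bot, concept_top}"
    using block_has_proper_element[OF blk] by (metis surj_pair)
  then obtain b where gb: "g b \<noteq> bot"
    using concept_eq_bot_iff by fastforce
  obtain a where Rab: "R a b \<noteq> bot"
    using cols by blast
  have "attribute_concept b (g b) \<in> K"
    using block_comparable_mem[OF blk k(1,3) attribute_concept_in_concepts attribute_concept_proper[OF gb Rab]]
      attribute_concept_le_concept[OF k(2)] by blast
  then show ?thesis
    using attribute_concept_top_in_block[OF blk _ attribute_concept_proper[OF gb Rab] Rab] by blast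
qed

end

theorem proposition33:
  fixes n :: nat
    and tn sw nw :: "nat \<Rightarrow> 'l::complete_lattice \<Rightarrow> 'l \<Rightarrow> 'l"
    and R :: "'a \<Rightarrow> 'b \<Rightarrow> 'l"
    and \<sigma> :: "'a \<Rightarrow> 'b \<Rightarrow> nat"
    and \<Lambda> :: "'i set"
    and K :: "'i \<Rightarrow> (('b \<Rightarrow> 'l) \<times> ('a \<Rightarrow> 'l)) set"
  assumes adj: "\<forall>i\<in>{1..n}. adjoint_triple (tn i) (sw i) (nw i)"
    and bnd: "\<forall>i\<in>{1..n}. \<forall>x. tn i x top = x \<and> tn i top x = x"
    and sig: "\<forall>a b. \<sigma> a b \<in> {1..n}"
    and norm: "normalized_context R"
    and dec: "decomposition_independent_blocks (concepts sw nw R \<sigma>) concept_le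
                 concept_bot concept_top \<Lambda> K"
  shows "partition_on (UNIV :: 'a set) ((\<lambda>\<mu>. obj_block sw nw R \<sigma> (K \<mu>)) ` \<Lambda>)
       \<and> partition_on (UNIV :: 'b set) ((\<lambda>\<mu>. attr_block sw nw R \<sigma> (K \<mu>)) ` \<Lambda>)"
proof -
  interpret multi_adjoint_context n tn sw nw R \<sigma>
    using adj bnd sig by unfold_locales
  have rows: "\<forall>a. \<exists>b. R a b \<noteq> bot" and cols: "\<forall>b. \<exists>a. R a b \<noteq> bot"
    using norm unfolding normalized_context_def by blast+
  have blk: "is_block \<M> concept_le concept_bot concept_top (K \<mu>)" if "\<mu> \<in> \<Lambda>" for \<mu>
    using dec that unfolding decomposition_independent_blocks_def by blast
  have "(\<lambda>\<mu>. obj_block sw nw R \<sigma> (K \<mu>)) ` \<Lambda> = (\<lambda>\<mu>. {a. object_concept a top \<in> K \<mu>}) ` \<Lambda>"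
    using obj_block_eq[OF rows blk] by (rule image_cong[OF refl])
  moreover have "partition_on UNIV ((\<lambda>\<mu>. {a. object_concept a top \<in> K \<mu>}) ` \<Lambda>)"
  proof (rule partition_on_block_preimages[OF dec object_concept_in_concepts])
    show "object_concept a top \<notin> {concept_bot, concept_top}" for a
      using rows object_concept_top_proper by blast
    show "\<exists>a. object_concept a top \<in> K \<mu>" if "\<mu> \<in> \<Lambda>" for \<mu>
      using block_contains_object_concept_top[OF rows blk[OF that]] .
  qed
  moreover have "(\<lambda>\<mu>. attr_block sw nw R \<sigma> (K \<mu>)) ` \<Lambda> = (\<lambda>\<mu>. {b. attribute_concept b top \<in> K \<mu>}) ` \<Lambda>"
    using attr_block_eq[OF cols blk] by (rule image_cong[OF refl])
  moreover have "partition_on UNIV ((\<lambda>\<mu>. {b. attribute_concept b top \<in> K \<mu>}) ` \<Lambda>)"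
  proof (rule partition_on_block_preimages[OF dec attribute_concept_in_concepts])
    show "attribute_concept b top \<notin> {concept_bot, concept_top}" for b
      using cols attribute_concept_top_proper by blast
    show "\<exists>b. attribute_concept b top \<in> K \<mu>" if "\<mu> \<in> \<Lambda>" for \<mu>
      using block_contains_attribute_concept_top[OF cols blk[OF that]] .
  qed
  ultimately show ?thesis
    by simp
qed

end
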